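(* Fix $m\ge1$. For every constant $c>0$, \[\limsup_{n\to\infty}\left\|OST_{m,n}^{\,n\log n+cn}-U_{m,n}\right\|_{Sep}\le e^{-c}.\]
   Context: Let $\xi$ be a primitive $m$-th root of unity and $[n]=\{1,\dots,n\}$. The generalized symmetric group $G_{m,n}$ (order $m^nn!$) is the set of tuples $(\xi^{k_1},\dots,\xi^{k_n},\sigma)$ with $k_i\in\mathbb{Z}_m$, $\sigma\in S_n$, with multiplication $(\xi^{k_1},\dots,\xi^{k_n},\sigma)(\xi^{k_1'},\dots,\xi^{k_n'},\sigma')=(\xi^{k_1}\xi^{k'_{\sigma(1)}},\dots,\xi^{k_n}\xi^{k'_{\sigma(n)}},\sigma\sigma')$. For $1\le i\le j\le n$, $k\in\mathbb{Z}_m$, let $g_{i,j,k}$ have permutation part the transposition $(ij)$ (identity if $i=j$) and tuple with $\xi^k$ in positions $i$ and $j$ and $1$ elsewhere. $OST_{m,n}$ is the law of $g_{i,j,k}$ with $j$ uniform on $[n]$, then $i$ uniform on $[j]$, $k$ uniform on $\mathbb{Z}_m$ independently (probability $\frac{1}{njm}$ per triple). $OST^t_{m,n}$ is its $t$-fold convolution power (exponents understood as integers). $U_{m,n}$ is the uniform distribution on $G_{m,n}$, and the separation distance is $\|P-U\|_{Sep}=1-\min_{g\in G_{m,n}}P(g)/U(g)$. *)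

theory Defs
  imports "HOL-Analysis.Analysis" "HOL-Combinatorics.Transposition" "HOL-Combinatorics.Permutations"
begin

text \<open>Elements of the generalized symmetric group G(m,n) are encoded as pairs (k, sigma):
  k i in {0..<m} is the exponent of xi in position i (for i in {1..n}, and 0 outside),
  sigma permutes {1..n}.\<close>

definition gsym :: "nat \<Rightarrow> nat \<Rightarrow> ((nat \<Rightarrow> nat) \<times> (nat \<Rightarrow> nat)) set" where
  "gsym m n = {(k, \<sigma>). (\<forall>i\<in>{1..n}. k i < m) \<and> (\<forall>i. i \<notin> {1..n} \<longrightarrow> k i = 0)
                        \<and> \<sigma> permutes {1..n}}"

definition gmult :: "nat \<Rightarrow> nat \<Rightarrow> ((nat \<Rightarrow> nat) \<times> (nat \<Rightarrow> nat)) \<Rightarrow>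
    ((nat \<Rightarrow> nat) \<times> (nat \<Rightarrow> nat)) \<Rightarrow> ((nat \<Rightarrow> nat) \<times> (nat \<Rightarrow> nat))" where
  "gmult m n x y = ((\<lambda>i. if i \<in> {1..n} then (fst x i + fst y (snd x i)) mod m else 0),
                    snd x \<circ> snd y)"

definition gunit :: "(nat \<Rightarrow> nat) \<times> (nat \<Rightarrow> nat)" where
  "gunit = ((\<lambda>_. 0), id)"

definition ggen :: "nat \<Rightarrow> nat \<Rightarrow> nat \<Rightarrow> (nat \<Rightarrow> nat) \<times> (nat \<Rightarrow> nat)" where
  "ggen i j k = ((\<lambda>l. if l = i \<or> l = j then k else 0), Transposition.transpose i j)"

definition OST :: "nat \<Rightarrow> nat \<Rightarrow> (nat \<Rightarrow> nat) \<times> (nat \<Rightarrow> nat) \<Rightarrow> real" where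
  "OST m n g = (\<Sum>j\<in>{1..n}. \<Sum>i\<in>{1..j}. \<Sum>k\<in>{0..<m}.
                  if g = ggen i j k then 1 / (real n * real j * real m) else 0)"

definition gconv :: "nat \<Rightarrow> nat \<Rightarrow> ((nat \<Rightarrow> nat) \<times> (nat \<Rightarrow> nat) \<Rightarrow> real) \<Rightarrow>
    ((nat \<Rightarrow> nat) \<times> (nat \<Rightarrow> nat) \<Rightarrow> real) \<Rightarrow> (nat \<Rightarrow> nat) \<times> (nat \<Rightarrow> nat) \<Rightarrow> real" where
  "gconv m n P Q g = (\<Sum>a\<in>gsym m n. \<Sum>b\<in>gsym m n. if gmult m n a b = g then P a * Q b else 0)"

fun gconv_pow :: "nat \<Rightarrow> nat \<Rightarrow> ((nat \<Rightarrow> nat) \<times> (nat \<Rightarrow> nat) \<Rightarrow> real) \<Rightarrow> nat \<Rightarrow>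
    (nat \<Rightarrow> nat) \<times> (nat \<Rightarrow> nat) \<Rightarrow> real" where
  "gconv_pow m n P 0 = (\<lambda>g. if g = gunit then 1 else 0)"
| "gconv_pow m n P (Suc t) = gconv m n (gconv_pow m n P t) P"

definition Unif :: "nat \<Rightarrow> nat \<Rightarrow> (nat \<Rightarrow> nat) \<times> (nat \<Rightarrow> nat) \<Rightarrow> real" where
  "Unif m n g = 1 / real (card (gsym m n))"

definition sep_dist :: "nat \<Rightarrow> nat \<Rightarrow> ((nat \<Rightarrow> nat) \<times> (nat \<Rightarrow> nat) \<Rightarrow> real) \<Rightarrow> real" where
  "sep_dist m n P = 1 - Min ((\<lambda>g. P g / Unif m n g) ` gsym m n)"

end

(*
  A step of the walk picks a pivot j, a position i <= j and a colour k. Expanding the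
  convolution power, OST^t is a weighted sum over step sequences, and all sequences with
  the same word of pivots are equally likely. Once the pivot word contains every pivot
  1..n, the product of the steps is exactly uniform on G(m,n): for the permutation part
  because the Jucys-Murphy-type sums (1 j) + ... + (j j) commute and, taken in the
  Fisher-Yates order n, ..., 2, 1, produce every permutation exactly once; for the colour
  part because the final colour vector is a linear image, over Z/m, of the colours of the
  steps, and this linear map is onto. Hence OST^t(g) / U(g) is at least the probability
  that all pivots have been seen by time t, which is at least 1 - n (1 - 1/n)^t by the
  union bound, and t = n log n + c n makes n (1 - 1/n)^t <= e^(-c) e^(1/n).
*)
theory Submission
  imports Defs "HOL-Library.Function_Algebras"
begin

section \<open>The group and its elements\<close>

definition colourings :: "nat \<Rightarrow> nat \<Rightarrow> (nat \<Rightarrow> nat) set" where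
  "colourings m n = {k. (\<forall>i\<in>{1..n}. k i < m) \<and> (\<forall>i. i \<notin> {1..n} \<longrightarrow> k i = 0)}"

lemma gsym_eq: "gsym m n = colourings m n \<times> {\<sigma>. \<sigma> permutes {1..n}}"
  unfolding gsym_def colourings_def by auto

lemma finite_colourings: "finite (colourings m n)"
proof -
  have "colourings m n = {k. \<forall>i. (i \<in> {1..n} \<longrightarrow> k i \<in> {0..<m}) \<and> (i \<notin> {1..n} \<longrightarrow> k i = 0)}"
    unfolding colourings_def by auto
  then show ?thesis
    using finite_set_of_finite_funs[of "{1..n}" "{0..<m}" 0] by simp
qed

lemma finite_gsym: "finite (gsym m n)"
  unfolding gsym_eq using finite_colourings finite_permutations[of "{1..n}"] by simp

lemma gunit_in_gsym: "m \<ge> 1 \<Longrightarrow> gunit \<in> gsym m n"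
  unfolding gunit_def gsym_def by (auto simp: permutes_id)

lemma card_gsym_pos: "m \<ge> 1 \<Longrightarrow> card (gsym m n) > 0"
  using finite_gsym gunit_in_gsym card_gt_0_iff by blast

lemma card_colourings_pos: "m \<ge> 1 \<Longrightarrow> card (colourings m n) > 0"
proof -
  assume "m \<ge> 1"
  then have "(\<lambda>_. 0) \<in> colourings m n"
    by (simp add: colourings_def)
  then show ?thesis
    unfolding card_gt_0_iff using finite_colourings by blast
qed

lemma ggen_in_gsym: "1 \<le> i \<Longrightarrow> i \<le> j \<Longrightarrow> j \<le> n \<Longrightarrow> k < m \<Longrightarrow> ggen i j k \<in> gsym m n"
  unfolding ggen_def gsym_def by (auto intro!: permutes_swap_id)

lemma gmult_in_gsym: "a \<in> gsym m n \<Longrightarrow> b \<in> gsym m n \<Longrightarrow> m \<ge> 1 \<Longrightarrow> gmult m n a b \<in> gsym m n"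
  unfolding gmult_def gsym_def by (auto intro: permutes_compose)

section \<open>Expanding the convolution power\<close>

lemma sum_point_masses:
  fixes \<alpha> :: "'x \<Rightarrow> 'b::comm_semiring_1"
  assumes "finite A" "f ` X \<subseteq> A"
  shows "(\<Sum>a\<in>A. (\<Sum>x\<in>X. \<alpha> x * of_bool (f x = a)) * F a) = (\<Sum>x\<in>X. \<alpha> x * F (f x))"
proof -
  have "(\<Sum>a\<in>A. (\<Sum>x\<in>X. \<alpha> x * of_bool (f x = a)) * F a)
      = (\<Sum>x\<in>X. \<Sum>a\<in>A. \<alpha> x * (if f x = a then F a else 0))"
    unfolding sum_distrib_right by (subst sum.swap) (intro sum.cong refl; simp)
  also have "\<dots> = (\<Sum>x\<in>X. \<alpha> x * F (f x))"
    using assms by (intro sum.cong refl) (auto simp: sum_distrib_left[symmetric])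
  finally show ?thesis .
qed

lemma gconv_point_masses:
  assumes "finite X" "finite Y" "f ` X \<subseteq> gsym m n" "h ` Y \<subseteq> gsym m n"
  shows "gconv m n (\<lambda>a. \<Sum>x\<in>X. \<alpha> x * of_bool (f x = a)) (\<lambda>b. \<Sum>y\<in>Y. \<beta> y * of_bool (h y = b)) g
       = (\<Sum>x\<in>X. \<Sum>y\<in>Y. \<alpha> x * \<beta> y * of_bool (gmult m n (f x) (h y) = g))"
proof -
  have "gconv m n (\<lambda>a. \<Sum>x\<in>X. \<alpha> x * of_bool (f x = a)) (\<lambda>b. \<Sum>y\<in>Y. \<beta> y * of_bool (h y = b)) g
      = (\<Sum>a\<in>gsym m n. (\<Sum>x\<in>X. \<alpha> x * of_bool (f x = a)) *
           (\<Sum>b\<in>gsym m n. (\<Sum>y\<in>Y. \<beta> y * of_bool (h y = b)) * of_bool (gmult m n a b = g)))"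
    unfolding gconv_def sum_distrib_left by (intro sum.cong refl) (auto simp: sum_distrib_left)
  also have "\<dots> = (\<Sum>a\<in>gsym m n. (\<Sum>x\<in>X. \<alpha> x * of_bool (f x = a)) *
           (\<Sum>y\<in>Y. \<beta> y * of_bool (gmult m n a (h y) = g)))"
    using assms finite_gsym by (simp only: sum_point_masses)
  also have "\<dots> = (\<Sum>x\<in>X. \<alpha> x * (\<Sum>y\<in>Y. \<beta> y * of_bool (gmult m n (f x) (h y) = g)))"
    using assms finite_gsym by (simp only: sum_point_masses)
  finally show ?thesis
    by (simp add: sum_distrib_left mult.assoc)
qed

type_synonym step = "nat \<times> nat \<times> nat"

definition steps :: "nat \<Rightarrow> nat \<Rightarrow> step set" where
  "steps m n = {(i, j, k). 1 \<le> i \<and> i \<le> j \<and> j \<le> n \<and> k < m}"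

fun step_prob :: "nat \<Rightarrow> nat \<Rightarrow> step \<Rightarrow> real" where
  "step_prob m n (i, j, k) = 1 / (real n * real j * real m)"

fun step_gen :: "step \<Rightarrow> (nat \<Rightarrow> nat) \<times> (nat \<Rightarrow> nat)" where
  "step_gen (i, j, k) = ggen i j k"

text \<open>The head of a step list is the most recent step, i.e.\ the rightmost factor.\<close>

fun run :: "nat \<Rightarrow> nat \<Rightarrow> step list \<Rightarrow> (nat \<Rightarrow> nat) \<times> (nat \<Rightarrow> nat)" where
  "run m n [] = gunit"
| "run m n (s # ss) = gmult m n (run m n ss) (step_gen s)"

definition paths :: "nat \<Rightarrow> nat \<Rightarrow> nat \<Rightarrow> step list set" where
  "paths m n t = {ss. set ss \<subseteq> steps m n \<and> length ss = t}"

definition path_prob :: "nat \<Rightarrow> nat \<Rightarrow> step list \<Rightarrow> real" where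
  "path_prob m n ss = prod_list (map (step_prob m n) ss)"

lemma finite_steps: "finite (steps m n)"
  by (rule finite_subset[of _ "{1..n} \<times> {1..n} \<times> {0..<m}"]) (auto simp: steps_def)

lemma finite_paths: "finite (paths m n t)"
  unfolding paths_def using finite_steps by (rule finite_lists_length_eq)

lemma step_gen_in_gsym: "s \<in> steps m n \<Longrightarrow> step_gen s \<in> gsym m n"
  by (cases s) (auto simp: steps_def intro: ggen_in_gsym)

lemma run_in_gsym: "set ss \<subseteq> steps m n \<Longrightarrow> m \<ge> 1 \<Longrightarrow> run m n ss \<in> gsym m n"
  by (induction ss) (auto intro: gunit_in_gsym gmult_in_gsym step_gen_in_gsym)

lemma path_prob_nonneg: "path_prob m n ss \<ge> 0"
  unfolding path_prob_def by (rule prod_list_nonneg) auto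

lemma sum_steps:
  "(\<Sum>s\<in>steps m n. F s) = (\<Sum>j\<in>{1..n}. \<Sum>i\<in>{1..j}. \<Sum>k\<in>{0..<m}. F (i, j, k))"
proof -
  have "(\<Sum>s\<in>steps m n. F s) = (\<Sum>(j, i, k)\<in>(SIGMA j:{1..n}. SIGMA i:{1..j}. {0..<m}). F (i, j, k))"
    by (rule sum.reindex_bij_witness[where i = "\<lambda>(j, i, k). (i, j, k)" and j = "\<lambda>(i, j, k). (j, i, k)"])
      (auto simp: steps_def)
  then show ?thesis
    by (simp add: sum.Sigma)
qed

lemma OST_eq_sum_steps:
  "OST m n b = (\<Sum>s\<in>steps m n. step_prob m n s * of_bool (step_gen s = b))"
  unfolding OST_def sum_steps by (intro sum.cong refl) auto

lemma paths_0: "paths m n 0 = {[]}"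
  by (auto simp: paths_def)

lemma gconv_pow_OST_eq_sum_paths:
  assumes "m \<ge> 1"
  shows "gconv_pow m n (OST m n) t g = (\<Sum>ss\<in>paths m n t. path_prob m n ss * of_bool (run m n ss = g))"
proof (induction t arbitrary: g)
  case 0
  show ?case by (auto simp: paths_0 path_prob_def)
next
  case (Suc t)
  have power: "gconv_pow m n (OST m n) t = (\<lambda>a. \<Sum>ss\<in>paths m n t. path_prob m n ss * of_bool (run m n ss = a))"
    by (rule ext) (rule Suc.IH)
  have paths_Suc: "paths m n (Suc t) = (\<lambda>(ss, s). s # ss) ` (paths m n t \<times> steps m n)"
    unfolding paths_def by (rule lists_length_Suc_eq)
  have inj: "inj_on (\<lambda>(ss, s). s # ss) (paths m n t \<times> steps m n)"
    by (auto simp: inj_on_def)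
  have "gconv_pow m n (OST m n) (Suc t) g
      = (\<Sum>ss\<in>paths m n t. \<Sum>s\<in>steps m n.
           path_prob m n ss * step_prob m n s * of_bool (gmult m n (run m n ss) (step_gen s) = g))"
    unfolding gconv_pow.simps power unfolding OST_eq_sum_steps[abs_def]
    using assms by (intro gconv_point_masses finite_paths finite_steps)
      (auto simp: paths_def intro!: image_subsetI run_in_gsym step_gen_in_gsym)
  also have "\<dots> = (\<Sum>(ss, s)\<in>paths m n t \<times> steps m n. path_prob m n (s # ss) * of_bool (run m n (s # ss) = g))"
    by (simp add: sum.cartesian_product path_prob_def mult_ac)
  also have "\<dots> = (\<Sum>ss\<in>paths m n (Suc t). path_prob m n ss * of_bool (run m n ss = g))"
    unfolding paths_Suc sum.reindex[OF inj] by (simp add: case_prod_unfold comp_def)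
  finally show ?case .
qed

section \<open>Pivot words\<close>

definition pivots :: "step list \<Rightarrow> nat list" where
  "pivots ss = map (\<lambda>(i, j, k). j) ss"

definition pivot_paths :: "nat \<Rightarrow> nat list \<Rightarrow> step list set" where
  "pivot_paths m w = {ss. pivots ss = w \<and> (\<forall>(i, j, k)\<in>set ss. 1 \<le> i \<and> i \<le> j \<and> k < m)}"

definition covering_words :: "nat \<Rightarrow> nat \<Rightarrow> nat list set" where
  "covering_words n t = {w. set w = {1..n} \<and> length w = t}"

lemma pivot_paths_Nil: "pivot_paths m [] = {[]}"
  by (auto simp: pivot_paths_def pivots_def)

lemma pivot_paths_Cons:
  "pivot_paths m (j # w) = (\<lambda>(i, k, ss). (i, j, k) # ss) ` ({1..j} \<times> {0..<m} \<times> pivot_paths m w)"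
  by (fastforce simp: pivot_paths_def pivots_def Cons_eq_map_conv image_iff)

lemma finite_pivot_paths: "finite (pivot_paths m w)"
  by (induction w) (simp_all add: pivot_paths_Nil pivot_paths_Cons)

lemma sum_pivot_paths_Cons:
  "(\<Sum>ss\<in>pivot_paths m (j # w). F ss) = (\<Sum>i\<in>{1..j}. \<Sum>k\<in>{0..<m}. \<Sum>ss\<in>pivot_paths m w. F ((i, j, k) # ss))"
proof -
  have "inj_on (\<lambda>(i, k, ss). (i, j, k) # ss) ({1..j} \<times> {0..<m} \<times> pivot_paths m w)"
    by (auto simp: inj_on_def)
  then have "(\<Sum>ss\<in>pivot_paths m (j # w). F ss) = (\<Sum>(i, k, ss)\<in>{1..j} \<times> {0..<m} \<times> pivot_paths m w. F ((i, j, k) # ss))"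
    by (rule sum.reindex_cong[OF _ pivot_paths_Cons]) auto
  then show ?thesis
    by (simp add: sum.cartesian_product)
qed

lemma card_pivot_paths: "card (pivot_paths m w) = prod_list (map (\<lambda>j. j * m) w)"
proof (induction w)
  case (Cons j w)
  have "card (pivot_paths m (j # w)) = (\<Sum>ss\<in>pivot_paths m (j # w). 1)"
    by simp
  also have "\<dots> = j * m * card (pivot_paths m w)"
    unfolding sum_pivot_paths_Cons by simp
  finally show ?case
    using Cons.IH by simp
qed (simp add: pivot_paths_Nil)

lemma pivot_paths_subset_paths:
  "set w \<subseteq> {1..n} \<Longrightarrow> pivot_paths m w \<subseteq> paths m n (length w)"
  by (force simp: pivot_paths_def paths_def pivots_def steps_def)

lemma run_in_gsym_pivot_paths:
  assumes "m \<ge> 1" "set w \<subseteq> {1..n}" "ss \<in> pivot_paths m w"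
  shows "run m n ss \<in> gsym m n"
proof -
  have "set ss \<subseteq> steps m n"
    using pivot_paths_subset_paths[OF assms(2)] assms(3) by (auto simp: paths_def)
  then show ?thesis
    using assms(1) by (rule run_in_gsym)
qed

lemma path_prob_times_card_pivot_paths:
  assumes "ss \<in> pivot_paths m w" "set w \<subseteq> {1..n}" "m \<ge> 1"
  shows "path_prob m n ss * card (pivot_paths m w) = (1 / real n) ^ length w"
  using assms
proof (induction w arbitrary: ss)
  case (Cons j w)
  then obtain i k ss' where ss: "ss = (i, j, k) # ss'" "ss' \<in> pivot_paths m w" and "j \<ge> 1"
    by (auto simp: pivot_paths_Cons)
  then have "path_prob m n ss * card (pivot_paths m (j # w))
      = (1 / (real n * real j * real m) * (real j * real m)) * (path_prob m n ss' * card (pivot_paths m w))"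
    by (simp add: path_prob_def card_pivot_paths)
  also have "\<dots> = 1 / real n * (1 / real n) ^ length w"
    using Cons \<open>j \<ge> 1\<close> ss by simp
  finally show ?case
    by simp
qed (simp add: pivot_paths_Nil path_prob_def)

lemma sum_paths_ge_sum_covering_words:
  fixes F :: "step list \<Rightarrow> real"
  assumes "\<And>ss. F ss \<ge> 0"
  shows "(\<Sum>ss\<in>paths m n t. F ss) \<ge> (\<Sum>w\<in>covering_words n t. \<Sum>ss\<in>pivot_paths m w. F ss)"
proof -
  let ?C = "{ss\<in>paths m n t. set (pivots ss) = {1..n}}"
  have pivots_length: "length (pivots ss) = length ss" for ss
    by (simp add: pivots_def)
  have fibre: "{ss\<in>?C. pivots ss = w} = pivot_paths m w" if "w \<in> covering_words n t" for w
    using that pivot_paths_subset_paths[of w n m]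
    by (auto simp: covering_words_def pivot_paths_def paths_def steps_def)
  have "(\<Sum>w\<in>covering_words n t. \<Sum>ss\<in>pivot_paths m w. F ss) = (\<Sum>w\<in>covering_words n t. \<Sum>ss\<in>{ss\<in>?C. pivots ss = w}. F ss)"
    using fibre by simp
  also have "\<dots> = (\<Sum>ss\<in>?C. F ss)"
  proof (rule sum.group)
    show "finite ?C"
      using finite_paths by simp
    show "finite (covering_words n t)"
      by (rule finite_subset[of _ "{w. set w \<subseteq> {1..n} \<and> length w = t}"])
        (auto simp: covering_words_def intro: finite_lists_length_eq)
    show "pivots ` ?C \<subseteq> covering_words n t"
      by (auto simp: covering_words_def paths_def pivots_length)
  qed
  also have "\<dots> \<le> (\<Sum>ss\<in>paths m n t. F ss)"
    by (rule sum_mono2[OF finite_paths]) (auto simp: assms)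
  finally show ?thesis .
qed

section \<open>The permutation part\<close>

fun perm_of :: "step list \<Rightarrow> nat \<Rightarrow> nat" where
  "perm_of [] = id"
| "perm_of ((i, j, k) # ss) = perm_of ss \<circ> Transposition.transpose i j"

lemma snd_run: "snd (run m n ss) = perm_of ss"
  by (induction ss rule: perm_of.induct) (auto simp: gunit_def gmult_def ggen_def)

definition perm_count :: "nat \<Rightarrow> nat list \<Rightarrow> (nat \<Rightarrow> nat) \<Rightarrow> nat" where
  "perm_count m w \<sigma> = (\<Sum>ss\<in>pivot_paths m w. of_bool (perm_of ss = \<sigma>))"

text \<open>Right multiplication by \<open>m\<close> times the Jucys--Murphy-type element
  \<open>\<Sum>i\<le>j. (i j)\<close>, acting on functions on permutations.\<close>

definition jm_op :: "nat \<Rightarrow> nat \<Rightarrow> ((nat \<Rightarrow> nat) \<Rightarrow> nat) \<Rightarrow> (nat \<Rightarrow> nat) \<Rightarrow> nat" where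
  "jm_op m j f \<sigma> = (\<Sum>i\<in>{1..j}. m * f (\<sigma> \<circ> Transposition.transpose i j))"

lemma comp_transpose_eq_iff:
  "\<rho> \<circ> Transposition.transpose i j = \<sigma> \<longleftrightarrow> \<rho> = \<sigma> \<circ> Transposition.transpose i j"
  by (auto simp: comp_assoc)

lemma perm_count_eq_foldr: "perm_count m w = foldr (jm_op m) w (\<lambda>\<sigma>. of_bool (\<sigma> = id))"
proof (induction w)
  case (Cons j w)
  have "perm_count m (j # w) \<sigma> = jm_op m j (perm_count m w) \<sigma>" for \<sigma>
    unfolding perm_count_def jm_op_def sum_pivot_paths_Cons
    by (simp add: comp_transpose_eq_iff)
  then show ?case
    using Cons.IH by auto
qed (auto simp: perm_count_def pivot_paths_Nil fun_eq_iff of_bool_def)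

lemma jm_op_commute_less:
  assumes "a < b"
  shows "jm_op m a (jm_op m b f) = jm_op m b (jm_op m a f)"
proof
  fix \<sigma>
  let ?\<tau> = "Transposition.transpose"
  have conj: "?\<tau> i a \<circ> ?\<tau> i' b = ?\<tau> (?\<tau> i a i') b \<circ> ?\<tau> i a" if "i \<le> a" for i i'
    using that assms by (auto simp: fun_eq_iff Transposition.transpose_def)
  have "jm_op m a (jm_op m b f) \<sigma> = (\<Sum>i\<in>{1..a}. \<Sum>i'\<in>{1..b}. m * (m * f (\<sigma> \<circ> ?\<tau> i a \<circ> ?\<tau> i' b)))"
    unfolding jm_op_def by (simp add: sum_distrib_left)
  also have "\<dots> = (\<Sum>i\<in>{1..a}. \<Sum>i'\<in>{1..b}. m * (m * f (\<sigma> \<circ> ?\<tau> i' b \<circ> ?\<tau> i a)))"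
  proof (rule sum.cong[OF refl])
    fix i assume i: "i \<in> {1..a}"
    then have "?\<tau> i a permutes {1..b}"
      using assms by (intro permutes_swap_id) auto
    then have bij: "bij_betw (?\<tau> i a) {1..b} {1..b}"
      by (rule permutes_imp_bij)
    have "(\<Sum>i'\<in>{1..b}. m * (m * f (\<sigma> \<circ> ?\<tau> i a \<circ> ?\<tau> i' b)))
        = (\<Sum>i'\<in>{1..b}. m * (m * f (\<sigma> \<circ> ?\<tau> (?\<tau> i a i') b \<circ> ?\<tau> i a)))"
      using i by (intro sum.cong refl) (simp add: comp_assoc conj)
    also have "\<dots> = (\<Sum>i'\<in>{1..b}. m * (m * f (\<sigma> \<circ> ?\<tau> i' b \<circ> ?\<tau> i a)))"
      by (rule sum.reindex_bij_betw[OF bij])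
    finally show "(\<Sum>i'\<in>{1..b}. m * (m * f (\<sigma> \<circ> ?\<tau> i a \<circ> ?\<tau> i' b)))
        = (\<Sum>i'\<in>{1..b}. m * (m * f (\<sigma> \<circ> ?\<tau> i' b \<circ> ?\<tau> i a)))" .
  qed
  also have "\<dots> = jm_op m b (jm_op m a f) \<sigma>"
    unfolding jm_op_def by (subst sum.swap) (simp add: sum_distrib_left)
  finally show "jm_op m a (jm_op m b f) \<sigma> = jm_op m b (jm_op m a f) \<sigma>" .
qed

lemma jm_op_commute: "jm_op m a \<circ> jm_op m b = jm_op m b \<circ> jm_op m a"
  using jm_op_commute_less[of a b m] jm_op_commute_less[of b a m]
  by (cases a b rule: linorder_cases) auto

lemma comp_transpose_permutes_iff:
  "i \<in> S \<Longrightarrow> j \<in> S \<Longrightarrow> (\<sigma> \<circ> Transposition.transpose i j) permutes S \<longleftrightarrow> \<sigma> permutes S"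
  by (metis comp_transpose_eq_iff permutes_compose permutes_swap_id)

lemma permutes_atLeastAtMost_Suc_iff:
  "\<rho> permutes {1..l} \<longleftrightarrow> \<rho> permutes {1..Suc l} \<and> \<rho> (Suc l) = Suc l"
proof
  assume "\<rho> permutes {1..Suc l} \<and> \<rho> (Suc l) = Suc l"
  then show "\<rho> permutes {1..l}"
    unfolding permutes_def by (metis atLeastAtMost_iff le_Suc_eq)
qed (auto intro: permutes_subset simp: permutes_not_in)

lemma comp_transpose_permutes_less_iff:
  assumes "i \<in> {1..Suc l}"
  shows "(\<sigma> \<circ> Transposition.transpose i (Suc l)) permutes {1..l}
    \<longleftrightarrow> \<sigma> permutes {1..Suc l} \<and> \<sigma> i = Suc l"
proof -
  let ?\<rho> = "\<sigma> \<circ> Transposition.transpose i (Suc l)"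
  have "?\<rho> permutes {1..l} \<longleftrightarrow> ?\<rho> permutes {1..Suc l} \<and> ?\<rho> (Suc l) = Suc l"
    by (rule permutes_atLeastAtMost_Suc_iff)
  moreover have "?\<rho> permutes {1..Suc l} \<longleftrightarrow> \<sigma> permutes {1..Suc l}"
    using assms by (intro comp_transpose_permutes_iff) auto
  ultimately show ?thesis
    by simp
qed

lemma foldr_jm_op_fisher_yates:
  "foldr (jm_op m) (rev [1..<Suc l]) (\<lambda>\<sigma>. of_bool (\<sigma> = id)) = (\<lambda>\<sigma>. if \<sigma> permutes {1..l} then m ^ l else 0)"
proof (induction l)
  case (Suc l)
  have step: "(\<Sum>i\<in>{1..Suc l}. m * (if (\<sigma> \<circ> Transposition.transpose i (Suc l)) permutes {1..l} then m ^ l else 0))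
      = (if \<sigma> permutes {1..Suc l} then m ^ Suc l else 0)" for \<sigma>
  proof (cases "\<sigma> permutes {1..Suc l}")
    case True
    have "inv \<sigma> (Suc l) \<in> {1..Suc l}"
      using permutes_in_image[OF permutes_inv[OF True], of "Suc l"] by simp
    moreover have "(\<sigma> \<circ> Transposition.transpose i (Suc l)) permutes {1..l} \<longleftrightarrow> i = inv \<sigma> (Suc l)"
      if "i \<in> {1..Suc l}" for i
      using comp_transpose_permutes_less_iff[OF that, of \<sigma>] permutes_inv_eq[OF True] True by metis
    ultimately show ?thesis
      using True by (simp add: if_distrib cong: if_cong)
  next
    case False
    have "m * (if (\<sigma> \<circ> Transposition.transpose i (Suc l)) permutes {1..l} then m ^ l else 0) = 0"
      if "i \<in> {1..Suc l}" for i
      using comp_transpose_permutes_less_iff[OF that, of \<sigma>] False by simp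
    then have "(\<Sum>i\<in>{1..Suc l}. m * (if (\<sigma> \<circ> Transposition.transpose i (Suc l)) permutes {1..l} then m ^ l else 0)) = 0"
      by (intro sum.neutral ballI)
    with False show ?thesis
      by simp
  qed
  have rev_eq: "rev [1..<Suc (Suc l)] = Suc l # rev [1..<Suc l]"
    by simp
  have "jm_op m (Suc l) (\<lambda>\<sigma>. if \<sigma> permutes {1..l} then m ^ l else 0)
      = (\<lambda>\<sigma>. if \<sigma> permutes {1..Suc l} then m ^ Suc l else 0)"
    by (rule ext) (unfold jm_op_def, rule step)
  then show ?case
    unfolding rev_eq foldr.simps comp_def Suc.IH .
qed (simp add: fun_eq_iff id_def)

lemma foldr_jm_op_perm_const:
  assumes "set ws \<subseteq> {1..n}"
  shows "foldr (jm_op m) ws (\<lambda>\<sigma>. if \<sigma> permutes {1..n} then C else 0)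
       = (\<lambda>\<sigma>. if \<sigma> permutes {1..n} then prod_list (map (\<lambda>j. j * m) ws) * C else 0)"
  using assms
proof (induction ws)
  case (Cons j ws)
  have "foldr (jm_op m) (j # ws) (\<lambda>\<sigma>. if \<sigma> permutes {1..n} then C else 0)
      = jm_op m j (\<lambda>\<sigma>. if \<sigma> permutes {1..n} then prod_list (map (\<lambda>j. j * m) ws) * C else 0)"
    using Cons by simp
  also have "\<dots> = (\<lambda>\<sigma>. if \<sigma> permutes {1..n} then prod_list (map (\<lambda>j. j * m) (j # ws)) * C else 0)"
    using Cons.prems by (auto simp: jm_op_def comp_transpose_permutes_iff)
  finally show ?case .
qed (simp add: fun_eq_iff)

lemma perm_count_const_on_perms:
  assumes "set w = {1..n}" "\<sigma> permutes {1..n}" "\<sigma>' permutes {1..n}"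
  shows "perm_count m w \<sigma> = perm_count m w \<sigma>'"
proof -
  let ?fy = "rev [1..<Suc n]"
  have "mset ?fy \<subseteq># mset w"
    using assms(1) by (metis atLeastLessThanSuc_atLeastAtMost distinct_upt mset_rev mset_set_set
        mset_set_set_mset_msubset set_mset_mset set_upt)
  then obtain rest where "mset w = mset (rest @ ?fy)"
    by (metis mset_append mset_subset_eq_exists_conv ex_mset union_commute)
  moreover have "set rest \<subseteq> {1..n}"
    using assms(1) calculation by (metis Un_upper1 set_append set_mset_mset)
  ultimately have "perm_count m w = foldr (jm_op m) rest (foldr (jm_op m) ?fy (\<lambda>\<sigma>. of_bool (\<sigma> = id)))"
    unfolding perm_count_eq_foldr foldr_conv_fold
    by (metis fold_multiset_equiv jm_op_commute mset_rev rev_append fold_append comp_apply)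
  also have "\<dots> = foldr (jm_op m) rest (\<lambda>\<sigma>. if \<sigma> permutes {1..n} then m ^ n else 0)"
    by (simp only: foldr_jm_op_fisher_yates)
  also have "\<dots> = (\<lambda>\<sigma>. if \<sigma> permutes {1..n} then prod_list (map (\<lambda>j. j * m) rest) * m ^ n else 0)"
    using \<open>set rest \<subseteq> {1..n}\<close> by (rule foldr_jm_op_perm_const)
  finally show ?thesis
    using assms(2,3) by simp
qed

section \<open>The colour part\<close>

fun twist :: "step list \<Rightarrow> nat \<Rightarrow> int" where
  "twist [] x = 0"
| "twist ((i, j, k) # ss) x = twist ss x + (if perm_of ss x \<in> {i, j} then int k else 0)"

lemma nat_mod_add_int:
  assumes "m > 0"
  shows "(nat (t mod int m) + k) mod m = nat ((t + int k) mod int m)"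
proof -
  have "int ((nat (t mod int m) + k) mod m) = (t mod int m + int k) mod int m"
    using assms by (simp add: of_nat_mod)
  also have "\<dots> = (t + int k) mod int m"
    by (simp add: mod_add_left_eq)
  finally show ?thesis
    by (metis nat_int)
qed

lemma fst_run:
  assumes "m \<ge> 1"
  shows "fst (run m n ss) x = (if x \<in> {1..n} then nat (twist ss x mod int m) else 0)"
proof (induction ss arbitrary: x)
  case (Cons s ss)
  obtain i j k where s: "s = (i, j, k)"
    by (cases s)
  have "nat (t mod int m) mod m = nat (t mod int m)" for t
    using nat_mod_add_int[of m t 0] assms by simp
  then show ?case
    using Cons.IH assms snd_run[of m n ss]
    by (auto simp: s gmult_def ggen_def nat_mod_add_int[symmetric])
qed (simp add: gunit_def)

lemma run_eq_iff:
  assumes "m \<ge> 1" "\<kappa> \<in> colourings m n"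
  shows "run m n ss = (\<kappa>, \<sigma>) \<longleftrightarrow> perm_of ss = \<sigma> \<and> (\<forall>x\<in>{1..n}. twist ss x mod int m = int (\<kappa> x))"
proof -
  have "fst (run m n ss) x = \<kappa> x \<longleftrightarrow> (x \<in> {1..n} \<longrightarrow> twist ss x mod int m = int (\<kappa> x))" for x
    using assms by (cases "x \<in> {1..n}") (auto simp: fst_run colourings_def nat_eq_iff)
  then have "fst (run m n ss) = \<kappa> \<longleftrightarrow> (\<forall>x\<in>{1..n}. twist ss x mod int m = int (\<kappa> x))"
    by (auto simp: fun_eq_iff)
  then show ?thesis
    by (metis prod.collapse prod.inject snd_run)
qed

definition skeleton :: "step list \<Rightarrow> (nat \<times> nat) list" where
  "skeleton ss = map (\<lambda>(i, j, k). (i, j)) ss"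

definition colour_bounded :: "nat \<Rightarrow> step list \<Rightarrow> bool" where
  "colour_bounded m ss \<longleftrightarrow> (\<forall>(i, j, k)\<in>set ss. k < m)"

lemma skeleton_simps [simp]:
  "skeleton [] = []"
  "skeleton ((i, j, k) # ss) = (i, j) # skeleton ss"
  by (simp_all add: skeleton_def)

lemma skeleton_eq_Nil_iff [simp]: "skeleton ds = [] \<longleftrightarrow> ds = []"
  by (simp add: skeleton_def)

lemma skeleton_eq_Cons_iff:
  "skeleton ds = (i, j) # p \<longleftrightarrow> (\<exists>k ds'. ds = (i, j, k) # ds' \<and> skeleton ds' = p)"
proof
  assume sk: "skeleton ds = (i, j) # p"
  then obtain s ds' where ds: "ds = s # ds'"
    by (cases ds) simp_all
  obtain i' j' k where "s = (i', j', k)"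
    by (cases s)
  with sk ds show "\<exists>k ds'. ds = (i, j, k) # ds' \<and> skeleton ds' = p"
    by simp
qed auto

lemma colour_bounded_Cons [simp]: "colour_bounded m ((i, j, k) # ss) \<longleftrightarrow> k < m \<and> colour_bounded m ss"
  by (simp add: colour_bounded_def)

lemma pivot_paths_colour_bounded: "ss \<in> pivot_paths m w \<Longrightarrow> colour_bounded m ss"
  unfolding pivot_paths_def colour_bounded_def by fastforce

lemma perm_of_skeleton: "skeleton ss' = skeleton ss \<Longrightarrow> perm_of ss' = perm_of ss"
proof (induction ss arbitrary: ss')
  case (Cons s ss)
  obtain i j k where s: "s = (i, j, k)"
    by (cases s)
  with Cons.prems have "skeleton ss' = (i, j) # skeleton ss"
    by simp
  then obtain k' ds' where "ss' = (i, j, k') # ds'" "skeleton ds' = skeleton ss"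
    by (blast dest: skeleton_eq_Cons_iff[THEN iffD1])
  with Cons.IH[of ds'] s show ?case
    by simp
qed simp

lemma pivot_paths_skeleton:
  assumes "ss \<in> pivot_paths m w" "skeleton ss' = skeleton ss" "colour_bounded m ss'"
  shows "ss' \<in> pivot_paths m w"
proof -
  have "pivots ss' = map snd (skeleton ss')" "pivots ss = map snd (skeleton ss)"
    by (auto simp: pivots_def skeleton_def)
  then have "pivots ss' = w"
    using assms(1,2) by (simp add: pivot_paths_def)
  moreover have "1 \<le> i \<and> i \<le> j" if "(i, j, k) \<in> set ss'" for i j k
  proof -
    have "(i, j) \<in> set (skeleton ss)"
      using that assms(2)[symmetric] by (force simp: skeleton_def)
    then obtain k0 where "(i, j, k0) \<in> set ss"
      by (auto simp: skeleton_def)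
    then show ?thesis
      using assms(1) by (auto simp: pivot_paths_def)
  qed
  ultimately show ?thesis
    using assms(3) by (auto simp: pivot_paths_def colour_bounded_def)
qed

definition shift :: "nat \<Rightarrow> step list \<Rightarrow> step list \<Rightarrow> step list" where
  "shift m ss ds = map2 (\<lambda>(i, j, k) (_, _, k'). (i, j, (k + k') mod m)) ss ds"

lemma shift_Cons [simp]: "shift m ((i, j, k) # ss) ((i', j', k') # ds) = (i, j, (k + k') mod m) # shift m ss ds"
  by (simp add: shift_def)

lemma skeleton_shift:
  "skeleton ds = skeleton ss \<Longrightarrow> skeleton (shift m ss ds) = skeleton ss"
proof (induction ss arbitrary: ds)
  case (Cons s ss)
  obtain i j k where s: "s = (i, j, k)"
    by (cases s)
  with Cons.prems have "skeleton ds = (i, j) # skeleton ss"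
    by simp
  then obtain k' ds' where "ds = (i, j, k') # ds'" "skeleton ds' = skeleton ss"
    by (blast dest: skeleton_eq_Cons_iff[THEN iffD1])
  with Cons.IH[of ds'] s show ?case
    by simp
qed (simp add: shift_def)

lemma colour_bounded_shift: "m \<ge> 1 \<Longrightarrow> colour_bounded m (shift m ss ds)"
  by (auto simp: shift_def colour_bounded_def)

lemma twist_shift:
  assumes "skeleton ds = skeleton ss"
  shows "twist (shift m ss ds) x mod int m = (twist ss x + twist ds x) mod int m"
  using assms
proof (induction ss arbitrary: ds)
  case Nil
  then show ?case
    by (simp add: shift_def)
next
  case (Cons s ss)
  obtain i j k where s: "s = (i, j, k)"
    by (cases s)
  from Cons.prems s have "skeleton ds = (i, j) # skeleton ss"
    by simp
  then obtain k' ds' where ds: "ds = (i, j, k') # ds'" "skeleton ds' = skeleton ss"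
    by (blast dest: skeleton_eq_Cons_iff[THEN iffD1])
  have perm: "perm_of (shift m ss ds') = perm_of ss" "perm_of ds' = perm_of ss"
    using perm_of_skeleton[OF skeleton_shift[OF ds(2)]] perm_of_skeleton[OF ds(2)] by simp_all
  have "twist (shift m (s # ss) ds) x mod int m
      = (twist (shift m ss ds') x + (if perm_of ss x \<in> {i, j} then int ((k + k') mod m) else 0)) mod int m"
    using ds s perm by simp
  also have "\<dots> = ((twist ss x + twist ds' x) + (if perm_of ss x \<in> {i, j} then int k + int k' else 0)) mod int m"
    by (rule mod_add_cong[OF Cons.IH[OF ds(2)]]) (simp add: of_nat_mod)
  also have "\<dots> = (twist (s # ss) x + twist ds x) mod int m"
    using ds s perm by (simp add: algebra_simps)
  finally show ?case .
qed

lemma mod_add_right_cancel_less: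
  fixes a b k m :: nat
  assumes "(a + k) mod m = (b + k) mod m" "a < m" "b < m"
  shows "a = b"
proof -
  have "(int a + int k) mod int m = (int b + int k) mod int m"
    using assms(1) by (metis of_nat_add of_nat_mod)
  then have "(int a + int k - int k) mod int m = (int b + int k - int k) mod int m"
    by (rule mod_diff_cong) (rule refl)
  then show ?thesis
    using assms(2,3) by (simp add: of_nat_mod[symmetric])
qed

lemma shift_cancel:
  assumes "skeleton ss1 = skeleton ds" "skeleton ss2 = skeleton ds"
    and "colour_bounded m ss1" "colour_bounded m ss2"
    and "shift m ss1 ds = shift m ss2 ds"
  shows "ss1 = ss2"
  using assms
proof (induction ds arbitrary: ss1 ss2)
  case (Cons d ds)
  obtain i j k where d: "d = (i, j, k)"
    by (cases d)
  from Cons.prems(1,2) d have "skeleton ss1 = (i, j) # skeleton ds" "skeleton ss2 = (i, j) # skeleton ds"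
    by simp_all
  then obtain k1 t1 k2 t2 where
    t: "ss1 = (i, j, k1) # t1" "skeleton t1 = skeleton ds" "ss2 = (i, j, k2) # t2" "skeleton t2 = skeleton ds"
    by (blast dest: skeleton_eq_Cons_iff[THEN iffD1])
  with Cons.prems(3-5) d have "(k1 + k) mod m = (k2 + k) mod m" "shift m t1 ds = shift m t2 ds"
    and bounded: "k1 < m" "k2 < m" "colour_bounded m t1" "colour_bounded m t2"
    by simp_all
  then have "k1 = k2"
    by (metis mod_add_right_cancel_less)
  moreover have "t1 = t2"
    using Cons.IH[OF t(2,4) bounded(3,4)] \<open>shift m t1 ds = shift m t2 ds\<close> .
  ultimately show ?case
    using t by simp
qed simp

interpretation int_fun: module "\<lambda>(c::int) (v::nat \<Rightarrow> int) x. c * v x"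
  by unfold_locales (auto simp: fun_eq_iff algebra_simps)

text \<open>\<open>twist ss\<close> is the sum of the colours of the steps times these vectors, so the colour
  residues reachable by recolouring a skeleton are exactly its span modulo \<open>m\<close>.\<close>

fun twist_vectors :: "step list \<Rightarrow> (nat \<Rightarrow> int) set" where
  "twist_vectors [] = {}"
| "twist_vectors ((i, j, k) # ss) = insert (\<lambda>x. if perm_of ss x \<in> {i, j} then 1 else 0) (twist_vectors ss)"

lemma twist_realisable:
  assumes "m \<ge> 1" "v \<in> int_fun.span (twist_vectors ss)"
  shows "\<exists>ds. skeleton ds = skeleton ss \<and> colour_bounded m ds \<and> (\<forall>x. twist ds x mod int m = v x mod int m)"
  using assms(2)
proof (induction ss arbitrary: v)
  case Nil
  then have "v = 0"
    by simp
  then show ?case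
    by (intro exI[of _ "[]"]) (simp add: colour_bounded_def)
next
  case (Cons s ss)
  obtain i j k where s: "s = (i, j, k)"
    by (cases s)
  define a where "a = (\<lambda>x. if perm_of ss x \<in> {i, j} then 1 else (0::int))"
  from Cons.prems obtain c where "v - (\<lambda>x. c * a x) \<in> int_fun.span (twist_vectors ss)"
    by (auto simp: s a_def int_fun.span_breakdown_eq)
  then obtain ds where ds: "skeleton ds = skeleton ss" "colour_bounded m ds"
    "\<And>x. twist ds x mod int m = (v x - c * a x) mod int m"
    using Cons.IH by fastforce
  let ?ds = "(i, j, nat (c mod int m)) # ds"
  have "twist ?ds x mod int m = v x mod int m" for x
  proof -
    have "twist ?ds x = twist ds x + (c mod int m) * a x"
      using perm_of_skeleton[OF ds(1)] assms(1) by (simp add: a_def)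
    then have "twist ?ds x mod int m = ((v x - c * a x) + c * a x) mod int m"
      using ds(3) by (simp add: mod_add_cong mod_mult_left_eq)
    then show ?thesis
      by simp
  qed
  moreover have "colour_bounded m ?ds"
    using ds(2) assms(1) by (simp add: colour_bounded_def nat_less_iff)
  ultimately show ?case
    using ds(1) s by (intro exI[of _ ?ds]) simp
qed

definition linked :: "(nat \<Rightarrow> int) set \<Rightarrow> nat \<Rightarrow> nat \<Rightarrow> bool" where
  "linked S a b \<longleftrightarrow>
     indicator {a} + indicator {b} \<in> int_fun.span S \<or> indicator {a} - indicator {b} \<in> int_fun.span S"

lemma linked_refl: "linked S a a"
  by (simp add: linked_def int_fun.span_zero)

lemma linked_sym: "linked S a b \<Longrightarrow> linked S b a"
  unfolding linked_def by (metis add.commute int_fun.span_neg minus_diff_eq)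

lemma linked_trans:
  assumes "linked S a b" "linked S b c"
  shows "linked S a c"
proof -
  let ?e = "\<lambda>x. indicator {x} :: nat \<Rightarrow> int"
  have "(?e a + ?e b) - (?e b + ?e c) = ?e a - ?e c" "(?e a + ?e b) - (?e b - ?e c) = ?e a + ?e c"
    "(?e a - ?e b) + (?e b + ?e c) = ?e a + ?e c" "(?e a - ?e b) + (?e b - ?e c) = ?e a - ?e c"
    by (simp_all add: algebra_simps)
  then show ?thesis
    using assms unfolding linked_def by (metis int_fun.span_add int_fun.span_diff)
qed

lemma linked_transfer:
  assumes "indicator {a} \<in> int_fun.span S" "linked S a b"
  shows "indicator {b} \<in> int_fun.span S"
proof -
  let ?e = "\<lambda>x. indicator {x} :: nat \<Rightarrow> int"
  have "(?e a + ?e b) - ?e a = ?e b" "?e a - (?e a - ?e b) = ?e b"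
    by (simp_all add: algebra_simps)
  then show ?thesis
    using assms unfolding linked_def by (metis int_fun.span_diff)
qed

lemma linked_mono: "S \<subseteq> T \<Longrightarrow> linked S a b \<Longrightarrow> linked T a b"
  unfolding linked_def using int_fun.span_mono by blast

lemma perm_of_permutes_UNIV: "perm_of ss permutes UNIV"
proof (induction ss)
  case (Cons s ss)
  obtain i j k where s: "s = (i, j, k)"
    by (cases s)
  show ?case
    unfolding s perm_of.simps by (rule permutes_compose[OF permutes_swap_id[OF UNIV_I UNIV_I] Cons.IH])
qed (simp only: perm_of.simps permutes_id)

lemma linked_head:
  fixes i j k :: nat
  assumes "\<And>y. linked (twist_vectors ss) (perm_of ss y) y"
  defines "T \<equiv> twist_vectors ((i, j, k) # ss)"
  shows "linked T i j" and "i = j \<Longrightarrow> indicator {j} \<in> int_fun.span T"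
proof -
  let ?\<sigma> = "perm_of ss"
  have IH: "linked T (?\<sigma> y) y" for y
    by (rule linked_mono[OF _ assms(1)]) (auto simp: T_def)
  have inv: "?\<sigma> x = i \<longleftrightarrow> x = inv ?\<sigma> i" "?\<sigma> x = j \<longleftrightarrow> x = inv ?\<sigma> j" for x
    using permutes_inv_eq[OF perm_of_permutes_UNIV] by metis+
  have vec: "(\<lambda>x. if ?\<sigma> x \<in> {i, j} then 1 else 0) \<in> int_fun.span T"
    by (auto simp: T_def intro: int_fun.span_base)
  have linked_j: "linked T (inv ?\<sigma> j) j"
    using IH[of "inv ?\<sigma> j"] inv(2) by (metis linked_sym)
  show "indicator {j} \<in> int_fun.span T" if "i = j"
  proof -
    have "(\<lambda>x. if ?\<sigma> x \<in> {i, j} then 1 else 0) = (indicator {inv ?\<sigma> j} :: nat \<Rightarrow> int)"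
      using that inv by (auto simp: fun_eq_iff indicator_def)
    then show ?thesis
      using vec linked_j linked_transfer by metis
  qed
  show "linked T i j"
  proof (cases "i = j")
    case False
    then have "inv ?\<sigma> i \<noteq> inv ?\<sigma> j"
      using inv by metis
    with False have "(\<lambda>x. if ?\<sigma> x \<in> {i, j} then 1 else 0) = indicator {inv ?\<sigma> i} + (indicator {inv ?\<sigma> j} :: nat \<Rightarrow> int)"
      using inv by (auto simp: fun_eq_iff indicator_def)
    then have "linked T (inv ?\<sigma> i) (inv ?\<sigma> j)"
      using vec by (simp add: linked_def)
    moreover have "linked T i (inv ?\<sigma> i)"
      using IH[of "inv ?\<sigma> i"] inv(1) by metis
    ultimately show ?thesis
      using linked_j linked_trans by blast
  qed (simp add: linked_refl)
qed

text \<open>A step \<open>(i j)\<close> after the permutation \<open>\<sigma>\<close> contributes the vector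
  \<open>e (inv \<sigma> i) + e (inv \<sigma> j)\<close>, which links \<open>i\<close> and \<open>j\<close> through the invariant for \<open>\<sigma>\<close>.\<close>

lemma linked_perm_of: "linked (twist_vectors ss) (perm_of ss y) y"
proof (induction ss arbitrary: y)
  case (Cons s ss)
  obtain i j k where s: "s = (i, j, k)"
    by (cases s)
  let ?T = "twist_vectors (s # ss)"
  have IH: "linked ?T (perm_of ss y) y" for y
    by (rule linked_mono[OF _ Cons.IH]) (auto simp: s)
  have ij: "linked ?T i j"
    unfolding s by (rule linked_head(1)[OF Cons.IH])
  consider "y = i" | "y = j" | "y \<noteq> i" "y \<noteq> j"
    by blast
  then show ?case
  proof cases
    case 1
    then show ?thesis
      using linked_trans[OF IH[of j] linked_sym[OF ij]] by (simp add: s)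
  next
    case 2
    then show ?thesis
      using linked_trans[OF IH[of i] ij] by (simp add: s)
  next
    case 3
    then show ?thesis
      using IH[of y] by (simp add: s)
  qed
qed (simp add: linked_refl)

lemma twist_vectors_append: "twist_vectors ss \<subseteq> twist_vectors (pre @ ss)"
  by (induction pre rule: twist_vectors.induct) auto

text \<open>Induction on \<open>x\<close>: the step with pivot \<open>x\<close> either is \<open>(x x)\<close>, which contributes \<open>e\<^sub>x\<close>
  up to a link, or links \<open>x\<close> to a smaller position.\<close>

lemma unit_vector_in_span:
  assumes "ss \<in> pivot_paths m w" "set w = {1..n}" "x \<in> {1..n}"
  shows "indicator {x} \<in> int_fun.span (twist_vectors ss)"
  using assms(3)
proof (induction x rule: less_induct)
  case (less x)
  have "x \<in> set (pivots ss)"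
    using assms(1,2) less.prems by (simp add: pivot_paths_def)
  then obtain i k where ikx: "(i, x, k) \<in> set ss"
    by (auto simp: pivots_def)
  then obtain pre suf where ss: "ss = pre @ (i, x, k) # suf"
    by (meson split_list)
  have "1 \<le> i" "i \<le> x"
    using assms(1) ikx by (auto simp: pivot_paths_def)
  let ?T = "twist_vectors ((i, x, k) # suf)"
  have sub: "?T \<subseteq> twist_vectors ss"
    unfolding ss by (rule twist_vectors_append)
  note head = linked_head[OF linked_perm_of, where ss = suf and i = i and j = x and k = k]
  show ?case
  proof (cases "i = x")
    case True
    then show ?thesis
      using head(2) int_fun.span_mono[OF sub] by blast
  next
    case False
    then have "indicator {i} \<in> int_fun.span (twist_vectors ss)"
      using less \<open>1 \<le> i\<close> \<open>i \<le> x\<close> by auto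
    then show ?thesis
      using linked_transfer linked_mono[OF sub head(1)] by blast
  qed
qed

lemma sum_fun_apply: "(\<Sum>x\<in>A. f x) y = (\<Sum>x\<in>A. f x y)"
  by (induction A rule: infinite_finite_induct) auto

lemma twist_surjective:
  assumes "m \<ge> 1" "ss \<in> pivot_paths m w" "set w = {1..n}"
  shows "\<exists>ds. skeleton ds = skeleton ss \<and> colour_bounded m ds \<and> (\<forall>x\<in>{1..n}. twist ds x mod int m = d x mod int m)"
proof -
  let ?v = "\<Sum>x\<in>{1..n}. (\<lambda>y. d x * indicator {x} y)"
  have "?v \<in> int_fun.span (twist_vectors ss)"
    using unit_vector_in_span[OF assms(2,3)] by (intro int_fun.span_sum int_fun.span_scale)
  then obtain ds where "skeleton ds = skeleton ss" "colour_bounded m ds"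
    "\<And>x. twist ds x mod int m = ?v x mod int m"
    using twist_realisable[OF assms(1)] by blast
  moreover have "?v x = d x" if "x \<in> {1..n}" for x
    using that by (simp add: sum_fun_apply indicator_def sum.delta)
  ultimately show ?thesis
    by auto
qed

section \<open>Uniformity once every pivot has occurred\<close>

definition fibre :: "nat \<Rightarrow> nat \<Rightarrow> nat list \<Rightarrow> (nat \<Rightarrow> nat) \<times> (nat \<Rightarrow> nat) \<Rightarrow> step list set" where
  "fibre m n w g = {ss \<in> pivot_paths m w. run m n ss = g}"

lemma shift_in_fibre:
  assumes "m \<ge> 1" "\<kappa> \<in> colourings m n" "\<kappa>' \<in> colourings m n" "ss \<in> fibre m n w (\<kappa>, \<sigma>)"
    and "skeleton ds = skeleton ss"
    and "\<And>x. x \<in> {1..n} \<Longrightarrow> twist ds x mod int m = (int (\<kappa>' x) - int (\<kappa> x)) mod int m"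
  shows "shift m ss ds \<in> fibre m n w (\<kappa>', \<sigma>)"
proof -
  from assms(4) have ss: "ss \<in> pivot_paths m w" "perm_of ss = \<sigma>"
    "\<And>x. x \<in> {1..n} \<Longrightarrow> twist ss x mod int m = int (\<kappa> x)"
    using run_eq_iff[OF assms(1,2)] by (auto simp: fibre_def)
  have sk: "skeleton (shift m ss ds) = skeleton ss"
    by (rule skeleton_shift[OF assms(5)])
  have "shift m ss ds \<in> pivot_paths m w"
    using pivot_paths_skeleton[OF ss(1) sk] colour_bounded_shift[OF assms(1)] by simp
  moreover have "perm_of (shift m ss ds) = \<sigma>"
    using perm_of_skeleton[OF sk] ss(2) by simp
  moreover have "twist (shift m ss ds) x mod int m = int (\<kappa>' x)" if "x \<in> {1..n}" for x
  proof -
    have "twist (shift m ss ds) x mod int m = (twist ss x + twist ds x) mod int m"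
      by (rule twist_shift[OF assms(5)])
    also have "\<dots> = (int (\<kappa> x) + (int (\<kappa>' x) - int (\<kappa> x))) mod int m"
      using ss(3)[OF that] assms(6)[OF that] by (metis mod_add_cong mod_mod_trivial)
    also have "\<dots> = int (\<kappa>' x)"
      using assms(3) that by (simp add: colourings_def)
    finally show ?thesis .
  qed
  ultimately show ?thesis
    using run_eq_iff[OF assms(1,3)] by (simp add: fibre_def)
qed

text \<open>Recolouring every path of the fibre of \<open>(\<kappa>, \<sigma>)\<close> by colours whose twist is \<open>\<kappa>' - \<kappa>\<close>,
  chosen once per skeleton, maps it injectively into the fibre of \<open>(\<kappa>', \<sigma>)\<close>.\<close>

lemma card_fibre_mono:
  assumes "m \<ge> 1" "set w = {1..n}" "\<kappa> \<in> colourings m n" "\<kappa>' \<in> colourings m n"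
  shows "card (fibre m n w (\<kappa>, \<sigma>)) \<le> card (fibre m n w (\<kappa>', \<sigma>))"
proof -
  let ?d = "\<lambda>x. int (\<kappa>' x) - int (\<kappa> x)"
  have "\<exists>ds. skeleton ds = p \<and> colour_bounded m ds \<and> (\<forall>x\<in>{1..n}. twist ds x mod int m = ?d x mod int m)"
    if "p \<in> skeleton ` pivot_paths m w" for p
    using that twist_surjective[OF assms(1) _ assms(2), where d = ?d] by blast
  then obtain D where D: "\<And>p. p \<in> skeleton ` pivot_paths m w \<Longrightarrow>
      skeleton (D p) = p \<and> colour_bounded m (D p) \<and> (\<forall>x\<in>{1..n}. twist (D p) x mod int m = ?d x mod int m)"
    by metis
  define h where "h ss = shift m ss (D (skeleton ss))" for ss
  have skeleton_h: "skeleton (h ss) = skeleton ss" if "ss \<in> pivot_paths m w" for ss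
    unfolding h_def using D that by (intro skeleton_shift) blast
  have "h ss \<in> fibre m n w (\<kappa>', \<sigma>)" if "ss \<in> fibre m n w (\<kappa>, \<sigma>)" for ss
    unfolding h_def using that D[of "skeleton ss"]
    by (intro shift_in_fibre[OF assms(1,3,4)]) (auto simp: fibre_def)
  moreover have "inj_on h (fibre m n w (\<kappa>, \<sigma>))"
  proof (rule inj_onI)
    fix s1 s2
    assume "s1 \<in> fibre m n w (\<kappa>, \<sigma>)" "s2 \<in> fibre m n w (\<kappa>, \<sigma>)" and h: "h s1 = h s2"
    then have pp: "s1 \<in> pivot_paths m w" "s2 \<in> pivot_paths m w"
      by (simp_all add: fibre_def)
    have "skeleton s1 = skeleton (h s1)"
      using skeleton_h[OF pp(1)] by simp
    also have "\<dots> = skeleton s2"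
      unfolding h by (rule skeleton_h[OF pp(2)])
    finally have sk: "skeleton s1 = skeleton s2" .
    have D1: "skeleton (D (skeleton s1)) = skeleton s1"
      using D pp(1) by blast
    have "shift m s1 (D (skeleton s1)) = shift m s2 (D (skeleton s1))"
      using h sk by (simp add: h_def)
    then show "s1 = s2"
      using D1 sk pivot_paths_colour_bounded[OF pp(1)] pivot_paths_colour_bounded[OF pp(2)]
      by (intro shift_cancel[of s1 "D (skeleton s1)" s2 m]) simp_all
  qed
  moreover have "finite (fibre m n w (\<kappa>', \<sigma>))"
    using finite_pivot_paths by (simp add: fibre_def)
  ultimately show ?thesis
    by (intro card_inj_on_le) auto
qed

lemma card_fibre_colour_invariant:
  assumes "m \<ge> 1" "set w = {1..n}" "\<kappa> \<in> colourings m n" "\<kappa>' \<in> colourings m n"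
  shows "card (fibre m n w (\<kappa>, \<sigma>)) = card (fibre m n w (\<kappa>', \<sigma>))"
  using card_fibre_mono[OF assms] card_fibre_mono[OF assms(1,2,4,3)] by (rule antisym)

lemma sum_card_fibre: "finite A \<Longrightarrow> run m n ` pivot_paths m w \<subseteq> A \<Longrightarrow> (\<Sum>g\<in>A. card (fibre m n w g)) = card (pivot_paths m w)"
  using sum.group[of "pivot_paths m w" A "run m n" "\<lambda>_. 1 :: nat"] finite_pivot_paths
  by (simp add: fibre_def)

lemma sum_colourings_card_fibre:
  assumes "m \<ge> 1" "set w = {1..n}"
  shows "(\<Sum>\<kappa>\<in>colourings m n. card (fibre m n w (\<kappa>, \<sigma>))) = perm_count m w \<sigma>"
proof -
  have "(\<Sum>\<kappa>\<in>colourings m n. card (fibre m n w (\<kappa>, \<sigma>)))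
      = (\<Sum>\<kappa>\<in>colourings m n. \<Sum>ss\<in>pivot_paths m w. of_bool (run m n ss = (\<kappa>, \<sigma>)))"
    by (simp add: fibre_def finite_pivot_paths Int_def conj_commute)
  also have "\<dots> = (\<Sum>ss\<in>pivot_paths m w. \<Sum>\<kappa>\<in>colourings m n. of_bool (run m n ss = (\<kappa>, \<sigma>)))"
    by (rule sum.swap)
  also have "\<dots> = perm_count m w \<sigma>"
    unfolding perm_count_def
  proof (rule sum.cong[OF refl])
    fix ss assume "ss \<in> pivot_paths m w"
    then have "run m n ss \<in> gsym m n"
      using assms by (intro run_in_gsym_pivot_paths) auto
    then have "fst (run m n ss) \<in> colourings m n"
      by (auto simp: gsym_eq mem_Times_iff)
    then show "(\<Sum>\<kappa>\<in>colourings m n. of_bool (run m n ss = (\<kappa>, \<sigma>))) = of_bool (perm_of ss = \<sigma>)"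
      using finite_colourings by (simp add: prod_eq_iff snd_run sum.delta' of_bool_def if_distrib)
  qed
  finally show ?thesis .
qed

lemma card_fibre_uniform:
  assumes "m \<ge> 1" "set w = {1..n}" "g \<in> gsym m n"
  shows "card (gsym m n) * card (fibre m n w g) = card (pivot_paths m w)"
proof -
  have scaled: "card (colourings m n) * card (fibre m n w g') = perm_count m w (snd g')"
    if g'_in: "g' \<in> gsym m n" for g'
  proof -
    obtain \<kappa> \<sigma> where g': "g' = (\<kappa>, \<sigma>)" "\<kappa> \<in> colourings m n"
      using g'_in by (cases g') (auto simp: gsym_eq)
    have "card (colourings m n) * card (fibre m n w g') = (\<Sum>\<kappa>'\<in>colourings m n. card (fibre m n w (\<kappa>', \<sigma>)))"
      using card_fibre_colour_invariant[OF assms(1,2) _ g'(2)] by (simp add: g'(1))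
    then show ?thesis
      using sum_colourings_card_fibre[OF assms(1,2)] g'(1) by simp
  qed
  have const: "card (fibre m n w g') = card (fibre m n w g)" if "g' \<in> gsym m n" for g'
  proof -
    have "card (colourings m n) > 0"
      using assms(1) by (rule card_colourings_pos)
    moreover have "snd g' permutes {1..n}" "snd g permutes {1..n}"
      using that assms(3) by (auto simp: gsym_eq)
    then have "perm_count m w (snd g') = perm_count m w (snd g)"
      by (rule perm_count_const_on_perms[OF assms(2)])
    ultimately show ?thesis
      using scaled[OF that] scaled[OF assms(3)] by (metis mult_left_cancel not_gr_zero)
  qed
  have "card (pivot_paths m w) = (\<Sum>g'\<in>gsym m n. card (fibre m n w g'))"
    using run_in_gsym_pivot_paths[OF assms(1) equalityD1[OF assms(2)]]
    by (intro sum_card_fibre[symmetric] finite_gsym image_subsetI)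
  also have "\<dots> = card (gsym m n) * card (fibre m n w g)"
    using const by simp
  finally show ?thesis ..
qed

lemma sum_pivot_paths_run_eq:
  assumes "m \<ge> 1" "w \<in> covering_words n t" "g \<in> gsym m n"
  shows "(\<Sum>ss\<in>pivot_paths m w. path_prob m n ss * of_bool (run m n ss = g)) = (1 / real n) ^ t / card (gsym m n)"
proof -
  let ?P = "real (card (pivot_paths m w))"
  have w: "set w = {1..n}" "length w = t"
    using assms(2) by (simp_all add: covering_words_def)
  have "card (pivot_paths m w) \<noteq> 0"
    using assms(1) w(1) by (auto simp: card_pivot_paths prod_list_zero_iff)
  have prob: "path_prob m n ss = (1 / real n) ^ t / ?P" if "ss \<in> pivot_paths m w" for ss
  proof -
    have "path_prob m n ss * ?P = (1 / real n) ^ t"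
      using path_prob_times_card_pivot_paths[of ss m w n] that assms(1) w by simp
    then show ?thesis
      using \<open>card (pivot_paths m w) \<noteq> 0\<close> by (simp add: eq_divide_eq)
  qed
  have cnt: "(\<Sum>ss\<in>pivot_paths m w. of_bool (run m n ss = g)) = real (card (fibre m n w g))"
    by (simp add: fibre_def finite_pivot_paths Int_def conj_commute)
  have "(\<Sum>ss\<in>pivot_paths m w. path_prob m n ss * of_bool (run m n ss = g))
      = (\<Sum>ss\<in>pivot_paths m w. (1 / real n) ^ t / ?P * of_bool (run m n ss = g))"
    using prob by (intro sum.cong) auto
  also have "\<dots> = (1 / real n) ^ t / ?P * (\<Sum>ss\<in>pivot_paths m w. of_bool (run m n ss = g))"
    by (rule sum_distrib_left[symmetric])
  also have "\<dots> = (1 / real n) ^ t * (real (card (fibre m n w g)) / ?P)"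
    unfolding cnt by simp
  also have "real (card (fibre m n w g)) / ?P = 1 / card (gsym m n)"
    using card_fibre_uniform[OF assms(1) w(1) assms(3)] card_gsym_pos[OF assms(1)] \<open>card (pivot_paths m w) \<noteq> 0\<close>
    by (simp add: field_simps flip: of_nat_mult)
  finally show ?thesis
    by simp
qed

lemma gconv_pow_OST_ge_covering:
  assumes "m \<ge> 1" "g \<in> gsym m n"
  shows "gconv_pow m n (OST m n) t g \<ge> card (covering_words n t) * (1 / real n) ^ t / card (gsym m n)"
proof -
  have "card (covering_words n t) * (1 / real n) ^ t / card (gsym m n)
      = (\<Sum>w\<in>covering_words n t. \<Sum>ss\<in>pivot_paths m w. path_prob m n ss * of_bool (run m n ss = g))"
    using sum_pivot_paths_run_eq[OF assms(1) _ assms(2)] by simp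
  also have "\<dots> \<le> (\<Sum>ss\<in>paths m n t. path_prob m n ss * of_bool (run m n ss = g))"
    using path_prob_nonneg by (intro sum_paths_ge_sum_covering_words) simp
  also have "\<dots> = gconv_pow m n (OST m n) t g"
    using assms(1) by (rule gconv_pow_OST_eq_sum_paths[symmetric])
  finally show ?thesis .
qed

section \<open>The coupon collector bound\<close>

lemma card_non_covering_words_le:
  "card ({w. set w \<subseteq> {1..n} \<and> length w = t} - covering_words n t) \<le> n * (n - 1) ^ t"
proof -
  let ?missing = "\<lambda>x. {w. set w \<subseteq> {1..n} - {x} \<and> length w = t}"
  have "{w. set w \<subseteq> {1..n} \<and> length w = t} - covering_words n t \<subseteq> (\<Union>x\<in>{1..n}. ?missing x)"
    by (auto simp: covering_words_def)
  then have "card ({w. set w \<subseteq> {1..n} \<and> length w = t} - covering_words n t) \<le> card (\<Union>x\<in>{1..n}. ?missing x)"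
    by (intro card_mono) (auto intro: finite_lists_length_eq)
  also have "\<dots> \<le> (\<Sum>x\<in>{1..n}. card (?missing x))"
    by (rule card_UN_le) simp
  also have "\<dots> = (\<Sum>x\<in>{1..n}. (n - 1) ^ t)"
    by (intro sum.cong refl) (simp add: card_lists_length_eq)
  also have "\<dots> = n * (n - 1) ^ t"
    by simp
  finally show ?thesis .
qed

lemma card_covering_words_ge:
  assumes "n \<ge> 1"
  shows "real n ^ t - real n * (real n - 1) ^ t \<le> card (covering_words n t)"
proof -
  let ?W = "{w. set w \<subseteq> {1..n} \<and> length w = t}"
  have cov: "covering_words n t \<subseteq> ?W"
    by (auto simp: covering_words_def)
  have fin: "finite ?W"
    by (rule finite_lists_length_eq) simp
  have "real (card (?W - covering_words n t)) \<le> real (n * (n - 1) ^ t)"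
    using card_non_covering_words_le by (simp only: of_nat_le_iff)
  also have "\<dots> = real n * (real n - 1) ^ t"
    using assms by (simp add: of_nat_diff)
  finally have missing: "real (card (?W - covering_words n t)) \<le> real n * (real n - 1) ^ t" .
  have "card (?W - covering_words n t) = card ?W - card (covering_words n t)"
    by (rule card_Diff_subset[OF finite_subset[OF cov fin] cov])
  moreover have "card (covering_words n t) \<le> card ?W"
    by (rule card_mono[OF fin cov])
  ultimately have "card (covering_words n t) + card (?W - covering_words n t) = card ?W"
    by simp
  also have "\<dots> = n ^ t"
    by (simp add: card_lists_length_eq)
  finally have "real (card (covering_words n t)) + real (card (?W - covering_words n t)) = real n ^ t"
    by (metis of_nat_add of_nat_power)
  with missing show ?thesis
    by linarith
qed

lemma sep_dist_OST_pow_le: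
  assumes "m \<ge> 1" "n \<ge> 1"
  shows "sep_dist m n (gconv_pow m n (OST m n) t) \<le> real n * (1 - 1 / real n) ^ t"
proof -
  let ?q = "real (card (covering_words n t)) * (1 / real n) ^ t"
  have G: "real (card (gsym m n)) > 0"
    using card_gsym_pos[OF assms(1)] by simp
  have "gconv_pow m n (OST m n) t g / Unif m n g \<ge> ?q" if "g \<in> gsym m n" for g
  proof -
    have "?q \<le> gconv_pow m n (OST m n) t g * card (gsym m n)"
      using gconv_pow_OST_ge_covering[OF assms(1) that, of t] pos_divide_le_eq[OF G] by blast
    then show ?thesis
      by (simp add: Unif_def)
  qed
  then have "Min ((\<lambda>g. gconv_pow m n (OST m n) t g / Unif m n g) ` gsym m n) \<ge> ?q"
    using gunit_in_gsym[OF assms(1), of n] finite_gsym[of m n] by (subst Min_ge_iff) auto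
  then have "sep_dist m n (gconv_pow m n (OST m n) t) \<le> 1 - ?q"
    by (simp add: sep_dist_def)
  also have "\<dots> \<le> 1 - (real n ^ t - real n * (real n - 1) ^ t) * (1 / real n) ^ t"
    using card_covering_words_ge[OF assms(2), of t] by (intro diff_left_mono mult_right_mono) auto
  also have "\<dots> = real n * (1 - 1 / real n) ^ t"
    using assms(2) by (simp add: field_simps power_divide)
  finally show ?thesis .
qed

lemma coupon_collector_time_bound:
  fixes c :: real
  assumes "c \<ge> 0" "n \<ge> 1"
  shows "real n * (1 - 1 / real n) ^ nat \<lfloor>real n * ln (real n) + c * real n\<rfloor> \<le> exp (- c) * exp (1 / real n)"
proof -
  define x where "x = real n * ln (real n) + c * real n"
  define t where "t = nat \<lfloor>x\<rfloor>"
  have n: "real n \<ge> 1"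
    using assms(2) by simp
  have "x \<ge> 0"
    unfolding x_def using assms(1) n by simp
  then have t: "real t \<ge> x - 1"
    unfolding t_def by linarith
  have "(1 - 1 / real n) ^ t \<le> exp (- (1 / real n)) ^ t"
    using n exp_ge_add_one_self[of "- (1 / real n)"] by (intro power_mono) (auto simp: field_simps)
  also have "\<dots> = exp (real t * (- (1 / real n)))"
    by (rule exp_of_nat_mult[symmetric])
  also have "\<dots> \<le> exp ((x - 1) * (- (1 / real n)))"
    using t n by (intro exp_le_cancel_iff[THEN iffD2] mult_right_mono_neg) auto
  also have "\<dots> = exp (- ln (real n)) * exp (- c) * exp (1 / real n)"
    unfolding x_def using n by (simp add: field_simps flip: exp_add)
  also have "exp (- ln (real n)) = 1 / real n"
    using n by (simp add: exp_minus inverse_eq_divide)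
  finally show ?thesis
    using n unfolding t_def x_def by (simp add: field_simps)
qed

theorem proposition4p8:
  fixes m :: nat and c :: real
  assumes "m \<ge> 1" and "c > 0"
  shows "limsup (\<lambda>n. ereal (sep_dist m n
            (gconv_pow m n (OST m n) (nat \<lfloor>real n * ln (real n) + c * real n\<rfloor>))))
         \<le> ereal (exp (- c))"
proof -
  let ?sep = "\<lambda>n. ereal (sep_dist m n (gconv_pow m n (OST m n) (nat \<lfloor>real n * ln (real n) + c * real n\<rfloor>)))"
  let ?bound = "\<lambda>n. ereal (exp (- c) * exp (1 / real n))"
  have "?sep n \<le> ?bound n" if "n \<ge> 1" for n
    using order_trans[OF sep_dist_OST_pow_le[OF assms(1) that] coupon_collector_time_bound[OF less_imp_le[OF assms(2)] that]]
    by simp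
  then have "eventually (\<lambda>n. ?sep n \<le> ?bound n) sequentially"
    by (rule eventually_sequentiallyI)
  then have "limsup ?sep \<le> limsup ?bound"
    by (rule Limsup_mono)
  also have "limsup ?bound = ereal (exp (- c))"
  proof (rule lim_imp_Limsup[OF trivial_limit_sequentially])
    have "(\<lambda>n. exp (- c) * exp (1 / real n)) \<longlonglongrightarrow> exp (- c) * exp 0"
      by (intro tendsto_mult tendsto_const tendsto_exp lim_1_over_n)
    then show "?bound \<longlonglongrightarrow> ereal (exp (- c))"
      by (intro tendsto_ereal) simp
  qed
  finally show ?thesis .
qed

end
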